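(* Let $d(z)=\sum_{k\ge 0} d_k z^{-k-1}$ be a (formal) Laurent series, and let $P(z)=\sum_{\alpha=0}^{m} c_{\alpha,1}z^\alpha$ and $Q(z)=\sum_{\alpha} c_{\alpha,0}z^\alpha$ be complex polynomials with $c_{m,1}\neq 0$ and $\deg Q<\deg P=m$, where $m\ge 1$. Let $h(z)=Q(z)/P(z)$, expanded as a Laurent series at $z=\infty$ in powers of $z^{-1}$. Define, for $(x,y)\in\mathbb Z_+^2$, $$\varphi(x,y):=\operatorname{Res}\Big\{d(\xi)\Big(\tfrac{Q(\xi)}{P(\xi)}\Big)^y\xi^x\Big\}.$$ Then a double sequence $\{r(x,y)\}_{(x,y)\in\mathbb Z_+^2}$ of complex numbers is the rational Riordan array associated with the pair $d(z)$, $h(z)=Q(z)/P(z)$ if and only if it is a solution of the following Cauchy problem: (i) for all $x\ge 0$, $y\ge 0$: $$\sum_{\alpha=0}^{m} c_{\alpha,1}\, r(x+\alpha,y+1)-\sum_{\alpha=0}^{m} c_{\alpha,0}\, r(x+\alpha,y)=0$$ (equivalently $[P(\delta_1)\delta_2-Q(\delta_1)]r(x,y)=0$, where $\delta_1 r(x,y)=r(x+1,y)$, $\delta_2 r(x,y)=r(x,y+1)$), with $c_{\alpha,0}:=0$ for $\alpha>\deg Q$; (ii) $r(x,y)=\varphi(x,y)$ for all $(x,y)\in\mathbb Z_+^2$ with $(x,y)\not\geqslant(m,1)$, i.e. with $x<m$ or $y=0$.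
   Context: $\mathbb Z_+$ denotes the nonnegative integers. For a formal Laurent series in a variable $\xi$, $\operatorname{Res}$ denotes the coefficient of $\xi^{-1}$. Given formal Laurent series $d(z)=\sum_{k\ge0}d_kz^{-k-1}$ and $h(z)=\sum_{k\ge0}h_kz^{-k-1}$, the Riordan array associated with the pair $d,h$ is the double sequence $\{r(x,y)\}_{(x,y)\in\mathbb Z_+^2}$ whose generating function $\mathcal D(z,w)=\sum_{(x,y)\in\mathbb Z_+^2} r(x,y)z^{-x-1}w^{-y-1}$ equals $\frac{d(z)}{w-h(z)}:=\sum_{y\ge0} d(z)h(z)^y w^{-y-1}$; equivalently $r(x,y)=\operatorname{Res}\{d(z)h(z)^yz^x\}$. It is called rational if $h(z)$ is the expansion at $z=\infty$ of a rational function $Q(z)/P(z)$ with $P,Q$ as in the statement. For $(x,y),(a,b)\in\mathbb Z_+^2$, $(x,y)\geqslant(a,b)$ means $x\ge a$ and $y\ge b$. *)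

theory Defs
  imports "HOL-Computational_Algebra.Computational_Algebra"
begin

(* Formal Laurent series "at z = infinity" (in powers of z^{-1}) are represented as
   library formal Laurent series (type complex fls) in the variable t = z^{-1}.
   Thus z^k corresponds to fls_X_intpow (-k), and the coefficient of z^{-1}
   is the coefficient of t^1. *)

definition zpow :: "int \<Rightarrow> complex fls" where
  "zpow k = fls_X_intpow (- k)"

definition Res_inf :: "complex fls \<Rightarrow> complex" where
  "Res_inf f = fls_nth f 1"

(* the Laurent series sum_{k>=0} a_k z^{-k-1} *)
definition lser :: "(nat \<Rightarrow> complex) \<Rightarrow> complex fls" where
  "lser a = Abs_fls (\<lambda>n. if n \<ge> 1 then a (nat (n - 1)) else 0)"

definition poly_inf :: "complex poly \<Rightarrow> complex fls" where
  "poly_inf p = (\<Sum>\<alpha>\<le>degree p. fls_const (coeff p \<alpha>) * zpow (int \<alpha>))"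

definition rat_inf :: "complex poly \<Rightarrow> complex poly \<Rightarrow> complex fls" where
  "rat_inf Q P = poly_inf Q / poly_inf P"

definition riordan_array :: "complex fls \<Rightarrow> complex fls \<Rightarrow> nat \<Rightarrow> nat \<Rightarrow> complex" where
  "riordan_array d h x y = Res_inf (d * h ^ y * zpow (int x))"

end

theory Submission
  imports Defs
begin

text \<open>Multiplying \<open>h = Q/P\<close> by \<open>P\<close> and taking residues shows that the Riordan array satisfies
  \<open>[P(\<delta>\<^sub>1)\<delta>\<^sub>2 - Q(\<delta>\<^sub>1)] r = 0\<close>, since multiplication by \<open>z\<^sup>\<alpha>\<close> inside the residue is the shift
  \<open>\<delta>\<^sub>1\<^sup>\<alpha>\<close>. Conversely, as the leading coefficient of \<open>P\<close> is nonzero, the recurrence determines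
  \<open>r(x + m, y + 1)\<close> from values with smaller \<open>x\<close> or smaller \<open>y\<close>, so a solution is fixed by its
  values where \<open>x < m\<close> or \<open>y = 0\<close>.\<close>

lemma zpow_add: "zpow (a + b) = zpow a * zpow b"
  unfolding zpow_def using fls_X_intpow_times_fls_X_intpow[of "-a" "-b", where 'a=complex]
  by simp

lemma poly_inf_eq_sum:
  assumes "degree p \<le> n"
  shows "poly_inf p = (\<Sum>\<alpha>\<le>n. fls_const (coeff p \<alpha>) * zpow (int \<alpha>))"
  unfolding poly_inf_def
proof (rule sum.mono_neutral_left)
  show "\<forall>i\<in>{..n} - {..degree p}. fls_const (coeff p i) * zpow (int i) = 0"
    by (auto simp: coeff_eq_0)
qed (use assms in auto)

lemma fls_nth_poly_inf: "fls_nth (poly_inf p) (- int k) = coeff p k"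
proof -
  have "fls_nth (poly_inf p) (- int k)
      = (\<Sum>\<alpha>\<le>max k (degree p). coeff p \<alpha> * (if \<alpha> = k then 1 else 0))"
    by (simp add: poly_inf_eq_sum[of p "max k (degree p)"] fls_nth_sum zpow_def)
  also have "\<dots> = coeff p k"
    by (simp add: if_distrib eq_commute[of _ k] sum.delta cong: if_cong)
  finally show ?thesis .
qed

lemma poly_inf_eq_0_iff [simp]: "poly_inf p = 0 \<longleftrightarrow> p = 0"
  using fls_nth_poly_inf[of p "degree p"] by (auto simp: poly_inf_def)

lemma rat_inf_times_poly_inf: "P \<noteq> 0 \<Longrightarrow> rat_inf Q P * poly_inf P = poly_inf Q"
  by (simp add: rat_inf_def)

lemma Res_inf_times_poly_inf:
  assumes "degree p \<le> m"
  shows "Res_inf (A * zpow (int x) * poly_inf p)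
       = (\<Sum>\<alpha>\<le>m. coeff p \<alpha> * Res_inf (A * zpow (int (x + \<alpha>))))"
proof -
  have "A * zpow (int x) * poly_inf p
      = (\<Sum>\<alpha>\<le>m. fls_const (coeff p \<alpha>) * (A * zpow (int (x + \<alpha>))))"
    by (simp add: poly_inf_eq_sum[OF assms] sum_distrib_left zpow_add mult_ac)
  then show ?thesis
    by (simp add: Res_inf_def fls_nth_sum)
qed

lemma riordan_array_recurrence:
  assumes "h * poly_inf P = poly_inf Q" and "degree P \<le> m" and "degree Q \<le> m"
  shows "(\<Sum>\<alpha>\<le>m. coeff P \<alpha> * riordan_array d h (x + \<alpha>) (y + 1))
       = (\<Sum>\<alpha>\<le>m. coeff Q \<alpha> * riordan_array d h (x + \<alpha>) y)"
proof -
  have "(\<Sum>\<alpha>\<le>m. coeff P \<alpha> * riordan_array d h (x + \<alpha>) (y + 1))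
      = Res_inf (d * h ^ (y + 1) * zpow (int x) * poly_inf P)"
    unfolding riordan_array_def by (rule Res_inf_times_poly_inf[symmetric]) fact
  also have "\<dots> = Res_inf (d * h ^ y * zpow (int x) * poly_inf Q)"
    by (simp add: assms(1)[symmetric] mult_ac)
  also have "\<dots> = (\<Sum>\<alpha>\<le>m. coeff Q \<alpha> * riordan_array d h (x + \<alpha>) y)"
    unfolding riordan_array_def by (rule Res_inf_times_poly_inf) fact
  finally show ?thesis .
qed

lemma recurrence_solution_unique:
  fixes r s :: "nat \<Rightarrow> nat \<Rightarrow> 'a::field" and a b :: "nat \<Rightarrow> 'a"
  assumes "a m \<noteq> 0"
    and rec_r: "\<And>x y. (\<Sum>\<alpha>\<le>m. a \<alpha> * r (x + \<alpha>) (y + 1)) = (\<Sum>\<alpha>\<le>m. b \<alpha> * r (x + \<alpha>) y)"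
    and rec_s: "\<And>x y. (\<Sum>\<alpha>\<le>m. a \<alpha> * s (x + \<alpha>) (y + 1)) = (\<Sum>\<alpha>\<le>m. b \<alpha> * s (x + \<alpha>) y)"
    and init: "\<And>x y. x < m \<or> y = 0 \<Longrightarrow> r x y = s x y"
  shows "r = s"
proof -
  have "r x y = s x y" for x y
  proof (induction y arbitrary: x)
    case 0
    then show ?case by (simp add: init)
  next
    case (Suc y)
    show ?case
    proof (induction x rule: less_induct)
      case (less x)
      show ?case
      proof (cases "x < m")
        case True
        then show ?thesis by (simp add: init)
      next
        case False
        then obtain x0 where x: "x = x0 + m" by (metis add.commute le_add_diff_inverse not_less)
        have lower: "(\<Sum>\<alpha><m. a \<alpha> * r (x0 + \<alpha>) (Suc y)) = (\<Sum>\<alpha><m. a \<alpha> * s (x0 + \<alpha>) (Suc y))"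
          by (rule sum.cong) (use less x in auto)
        have "(\<Sum>\<alpha>\<le>m. a \<alpha> * r (x0 + \<alpha>) (y + 1)) = (\<Sum>\<alpha>\<le>m. a \<alpha> * s (x0 + \<alpha>) (y + 1))"
          using rec_r[of x0 y] rec_s[of x0 y] by (simp add: Suc.IH)
        then have "a m * r x (Suc y) = a m * s x (Suc y)"
          by (simp add: lessThan_Suc_atMost[symmetric] lower x)
        with \<open>a m \<noteq> 0\<close> show ?thesis by simp
      qed
    qed
  qed
  then show ?thesis by blast
qed

theorem theorem1:
  fixes d :: "nat \<Rightarrow> complex" and P Q :: "complex poly" and m :: nat
    and r :: "nat \<Rightarrow> nat \<Rightarrow> complex"
  assumes "m \<ge> 1" and "degree P = m" and "coeff P m \<noteq> 0" and "degree Q < degree P"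
  defines "\<phi> \<equiv> (\<lambda>x y. Res_inf (lser d * (rat_inf Q P) ^ y * zpow (int x)))"
  shows "(\<forall>x y. r x y = riordan_array (lser d) (rat_inf Q P) x y) \<longleftrightarrow>
         ((\<forall>x y. (\<Sum>\<alpha>\<le>m. coeff P \<alpha> * r (x + \<alpha>) (y + 1))
                   - (\<Sum>\<alpha>\<le>m. coeff Q \<alpha> * r (x + \<alpha>) y) = 0)
          \<and> (\<forall>x y. (x < m \<or> y = 0) \<longrightarrow> r x y = \<phi> x y))"
proof -
  define R where "R = riordan_array (lser d) (rat_inf Q P)"
  have "\<phi> = R"
    unfolding \<phi>_def R_def riordan_array_def by (intro ext) simp
  have rec_R: "(\<Sum>\<alpha>\<le>m. coeff P \<alpha> * R (x + \<alpha>) (y + 1)) = (\<Sum>\<alpha>\<le>m. coeff Q \<alpha> * R (x + \<alpha>) y)"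
    for x y
    unfolding R_def using assms(2-4)
    by (intro riordan_array_recurrence rat_inf_times_poly_inf) auto
  show ?thesis
    unfolding R_def[symmetric] \<open>\<phi> = R\<close> right_minus_eq
  proof
    assume "\<forall>x y. r x y = R x y"
    then show "(\<forall>x y. (\<Sum>\<alpha>\<le>m. coeff P \<alpha> * r (x + \<alpha>) (y + 1))
                     = (\<Sum>\<alpha>\<le>m. coeff Q \<alpha> * r (x + \<alpha>) y))
             \<and> (\<forall>x y. (x < m \<or> y = 0) \<longrightarrow> r x y = R x y)"
      using rec_R by simp
  next
    assume "(\<forall>x y. (\<Sum>\<alpha>\<le>m. coeff P \<alpha> * r (x + \<alpha>) (y + 1))
                     = (\<Sum>\<alpha>\<le>m. coeff Q \<alpha> * r (x + \<alpha>) y))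
             \<and> (\<forall>x y. (x < m \<or> y = 0) \<longrightarrow> r x y = R x y)"
    then have "r = R"
      by (intro recurrence_solution_unique[where a = "coeff P" and b = "coeff Q" and s = R, OF assms(3) _ rec_R]) auto
    then show "\<forall>x y. r x y = R x y" by simp
  qed
qed

end
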